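(* Let $(M,d)$ be a metric space, $\mathsf{P}\subseteq M$ a set of $n$ points, $1\le\ell\le k\le n$ integers, $m=\lfloor k/\ell\rfloor$, $c\ge1$. Let $Q=\{q_1,\dots,q_m\}\subseteq\mathsf{P}$ satisfy $\max_{p\in\mathsf{P}} d_Q(p,1)\le c\,r_{\mathrm{cen}}$, where $r_{\mathrm{cen}}=\min_{S\subseteq\mathsf{P},|S|=m}\max_{p\in\mathsf{P}} d_S(p,1)$. Let $C\subseteq\mathsf{P}$ with $|C|=k$ and $C\supseteq\bigcup_{i=1}^m N_{\mathsf{P}}(q_i,\ell)$, and let $r_{\mathrm{alg}}=\max_{p\in\mathsf{P}} d_C(p,\ell)$, $r_{\mathrm{opt}}=\min_{C'\subseteq\mathsf{P},|C'|=k}\max_{p\in\mathsf{P}} d_{C'}(p,\ell)$. Then $r_{\mathrm{alg}}\le r_{\mathrm{opt}}+2c\,r_{\mathrm{cen}}$.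
   Context: For a finite set $S\subseteq M$, a point $p\in M$ and an integer $1\le i\le|S|$, $d_S(p,i)$ denotes the radius of the smallest closed ball centered at $p$ containing at least $i$ points of $S$. Nearest neighbors are ordered lexicographically by $(d(p,s),\text{index of }s)$; $N_S(p,i)$ is the set of the first $i$ points of $S$ in this order, $|N_S(p,i)|=i$. *)

theory Defs
  imports "HOL-Analysis.Analysis"
begin

definition kdist :: "'a::metric_space set \<Rightarrow> 'a \<Rightarrow> nat \<Rightarrow> real" where
  "kdist S p i = Inf {r. 0 \<le> r \<and> i \<le> card {s \<in> S. dist p s \<le> r}}"

definition nn_less :: "('a \<Rightarrow> nat) \<Rightarrow> 'a::metric_space \<Rightarrow> 'a \<Rightarrow> 'a \<Rightarrow> bool" where
  "nn_less idx p t s \<longleftrightarrow> dist p t < dist p s \<or> (dist p t = dist p s \<and> idx t < idx s)"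

definition knn :: "('a \<Rightarrow> nat) \<Rightarrow> 'a::metric_space set \<Rightarrow> 'a \<Rightarrow> nat \<Rightarrow> 'a set" where
  "knn idx S p i = {s \<in> S. card {t \<in> S. nn_less idx p t s} < i}"

definition cost :: "'a::metric_space set \<Rightarrow> 'a set \<Rightarrow> nat \<Rightarrow> real" where
  "cost P S i = Max ((\<lambda>p. kdist S p i) ` P)"

definition opt_cost :: "'a::metric_space set \<Rightarrow> nat \<Rightarrow> nat \<Rightarrow> real" where
  "opt_cost P j i = Min ((\<lambda>S. cost P S i) ` {S. S \<subseteq> P \<and> card S = j})"

end

theory Submission
  imports Defs
begin

text \<open>Every point p is within c r_cen of some centre q \<in> Q. The l nearest neighbours
  N_P(q,l) all lie in C and within d_P(q,l) of q, so the ball of radius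
  d(p,q) + d_P(q,l) around p contains l points of C. Finally d_P(q,l) \<le> d_{C'}(q,l)
  for any optimal C' \<subseteq> P, hence d_P(q,l) \<le> r_opt. This even gives the sharper
  bound r_opt + c r_cen.\<close>

lemma kdist_attained:
  fixes p :: "'a::metric_space"
  assumes "finite S" and "i \<le> card S"
  shows kdist_nonneg: "0 \<le> kdist S p i"
    and card_ball_kdist: "i \<le> card {s \<in> S. dist p s \<le> kdist S p i}"
proof -
  define A where "A r = {s \<in> S. dist p s \<le> r}" for r
  define R where "R = {r. 0 \<le> r \<and> i \<le> card (A r)}"
  have kdist_R: "kdist S p i = Inf R"
    by (simp add: kdist_def R_def A_def)
  have "A (\<Sum>s\<in>S. dist p s) = S"
    using assms(1) by (auto simp: A_def intro: member_le_sum)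
  then have "(\<Sum>s\<in>S. dist p s) \<in> R"
    using assms(2) by (simp add: R_def sum_nonneg)
  then obtain r0 where r0: "r0 \<in> R" and r0_min: "\<And>r. r \<in> R \<Longrightarrow> card (A r0) \<le> card (A r)"
    using ex_has_least_nat[of "\<lambda>r. r \<in> R" _ "\<lambda>r. card (A r)"] by blast
  \<comment> \<open>the sets A r form a chain, so the one of least cardinality lies inside all others\<close>
  have "A r0 \<subseteq> A r" if "r \<in> R" for r
  proof (rule ccontr)
    assume "\<not> A r0 \<subseteq> A r"
    then have "r < r0"
      by (auto simp: A_def)
    then have "A r \<subset> A r0"
      using \<open>\<not> A r0 \<subseteq> A r\<close> by (auto simp: A_def)
    then have "card (A r) < card (A r0)"
      using assms(1) by (intro psubset_card_mono) (auto simp: A_def)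
    with r0_min[OF that] show False
      by simp
  qed
  then have "A r0 \<subseteq> A (Inf R)"
    using r0 by (auto simp: A_def intro!: cInf_greatest)
  then have "card (A r0) \<le> card (A (Inf R))"
    using assms(1) by (intro card_mono) (auto simp: A_def)
  with r0 show "i \<le> card {s \<in> S. dist p s \<le> kdist S p i}"
    by (simp add: kdist_R R_def A_def)
  show "0 \<le> kdist S p i"
    using r0 by (auto simp: kdist_R R_def intro: cInf_greatest)
qed

lemma kdist_le:
  assumes "0 \<le> r" and "i \<le> card {s \<in> S. dist p s \<le> r}"
  shows "kdist S p i \<le> r"
  unfolding kdist_def using assms by (intro cInf_lower) (auto intro: bdd_belowI[of _ 0])

lemma kdist_antimono:
  assumes "finite T" and "S \<subseteq> T" and "i \<le> card S"
  shows "kdist T p i \<le> kdist S p i"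
proof -
  have "finite S"
    using assms finite_subset by blast
  have "card {s \<in> S. dist p s \<le> kdist S p i} \<le> card {s \<in> T. dist p s \<le> kdist S p i}"
    using assms by (intro card_mono) auto
  then show ?thesis
    using kdist_attained[OF \<open>finite S\<close> assms(3)] by (intro kdist_le) (auto intro: le_trans)
qed

lemma kdist_one_attained:
  assumes "finite S" and "S \<noteq> {}"
  obtains s where "s \<in> S" and "dist p s \<le> kdist S p 1"
proof -
  have "1 \<le> card {s \<in> S. dist p s \<le> kdist S p 1}"
    using assms by (intro card_ball_kdist) (auto simp: Suc_le_eq card_gt_0_iff)
  then show ?thesis
    using that by (metis (no_types, lifting) card.empty empty_Collect_eq not_one_le_zero)
qed

lemma bij_betw_rank:
  fixes less :: "'a \<Rightarrow> 'a \<Rightarrow> bool"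
  assumes "finite A"
    and trans: "\<And>a b c. less a b \<Longrightarrow> less b c \<Longrightarrow> less a c"
    and irrefl: "\<And>a. \<not> less a a"
    and total: "\<And>a b. a \<in> A \<Longrightarrow> b \<in> A \<Longrightarrow> a \<noteq> b \<Longrightarrow> less a b \<or> less b a"
  shows "bij_betw (\<lambda>a. card {b \<in> A. less b a}) A {..<card A}"
proof -
  define rank where "rank a = card {b \<in> A. less b a}" for a
  have rank_less: "rank a < rank a'" if "a \<in> A" "less a a'" for a a'
  proof -
    have "{b \<in> A. less b a} \<subset> {b \<in> A. less b a'}"
      using that trans irrefl by blast
    then show ?thesis
      unfolding rank_def using assms(1) by (intro psubset_card_mono) auto
  qed
  have "inj_on rank A"
  proof (rule inj_onI)
    fix a a' assume "a \<in> A" "a' \<in> A" "rank a = rank a'"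
    then show "a = a'"
      using rank_less total by (metis less_irrefl)
  qed
  moreover have "rank ` A \<subseteq> {..<card A}"
    unfolding rank_def using assms(1) irrefl by (auto intro!: psubset_card_mono)
  ultimately show ?thesis
    unfolding rank_def[symmetric] bij_betw_def
    by (metis card_image card_lessThan card_subset_eq finite_lessThan)
qed

lemma card_knn:
  assumes "finite P" and "inj_on idx P" and "l \<le> card P"
  shows "card (knn idx P q l) = l"
proof -
  define rank where "rank s = card {t \<in> P. nn_less idx q t s}" for s
  have "bij_betw rank P {..<card P}"
    unfolding rank_def using assms(1)
  proof (rule bij_betw_rank)
    show "\<And>a b. a \<in> P \<Longrightarrow> b \<in> P \<Longrightarrow> a \<noteq> b \<Longrightarrow> nn_less idx q a b \<or> nn_less idx q b a"
      using assms(2) unfolding nn_less_def inj_on_def by (metis linorder_neqE_nat linorder_neqE_linordered_idom)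
  qed (auto simp: nn_less_def)
  then have "bij_betw rank (knn idx P q l) ({..<card P} \<inter> {..<l})"
    by (auto simp: knn_def rank_def bij_betw_def inj_on_def image_iff)
  then have "card (knn idx P q l) = card ({..<card P} \<inter> {..<l})"
    by (rule bij_betw_same_card)
  then show ?thesis
    using assms(3) by (simp add: Int_absorb1)
qed

lemma dist_knn_le_kdist:
  assumes "finite P" and "l \<le> card P" and "s \<in> knn idx P q l"
  shows "dist q s \<le> kdist P q l"
proof (rule ccontr)
  assume "\<not> ?thesis"
  then have "{t \<in> P. dist q t \<le> kdist P q l} \<subseteq> {t \<in> P. nn_less idx q t s}"
    by (auto simp: nn_less_def)
  then have "card {t \<in> P. dist q t \<le> kdist P q l} \<le> card {t \<in> P. nn_less idx q t s}"
    using assms(1) by (intro card_mono) auto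
  moreover have "card {t \<in> P. nn_less idx q t s} < l"
    using assms(3) by (simp add: knn_def)
  ultimately show False
    using card_ball_kdist[OF assms(1,2), of q] by simp
qed

lemma kdist_le_dist_plus_kdist_knn:
  assumes "finite P" and "inj_on idx P" and "l \<le> card P"
    and "C \<subseteq> P" and "knn idx P q l \<subseteq> C"
  shows "kdist C p l \<le> dist p q + kdist P q l"
proof (rule kdist_le)
  show "0 \<le> dist p q + kdist P q l"
    using kdist_nonneg[OF assms(1,3)] by simp
  have "knn idx P q l \<subseteq> {s \<in> C. dist p s \<le> dist p q + kdist P q l}"
    using assms(5) dist_knn_le_kdist[OF assms(1,3)] dist_triangle[of p _ q]
    by (force intro: order_trans add_left_mono)
  then have "card (knn idx P q l) \<le> card {s \<in> C. dist p s \<le> dist p q + kdist P q l}"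
    using finite_subset[OF assms(4,1)] by (intro card_mono) auto
  then show "l \<le> card {s \<in> C. dist p s \<le> dist p q + kdist P q l}"
    using card_knn[OF assms(1-3)] by simp
qed

lemma kdist_le_cost:
  assumes "finite P" and "p \<in> P"
  shows "kdist S p i \<le> cost P S i"
  unfolding cost_def using assms by (intro Max_ge) auto

lemma opt_cost_attained:
  assumes "finite P" and "j \<le> card P"
  obtains S where "S \<subseteq> P" and "card S = j" and "opt_cost P j i = cost P S i"
proof -
  obtain S0 where "S0 \<subseteq> P" "card S0 = j"
    using assms(2) obtain_subset_with_card_n by metis
  then have "opt_cost P j i \<in> (\<lambda>S. cost P S i) ` {S. S \<subseteq> P \<and> card S = j}"
    unfolding opt_cost_def using assms(1) by (intro Min_in) auto
  then show ?thesis
    using that by auto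
qed

lemma kdist_le_opt_cost:
  assumes "finite P" and "q \<in> P" and "i \<le> j" and "j \<le> card P"
  shows "kdist P q i \<le> opt_cost P j i"
proof -
  obtain S where S: "S \<subseteq> P" "card S = j" "opt_cost P j i = cost P S i"
    using opt_cost_attained[OF assms(1,4)] .
  have "kdist P q i \<le> kdist S q i"
    using S assms by (intro kdist_antimono) auto
  also have "\<dots> \<le> opt_cost P j i"
    using S(3) kdist_le_cost[OF assms(1,2)] by simp
  finally show ?thesis .
qed

theorem claim3:
  fixes P Q C :: "'a::metric_space set" and idx :: "'a \<Rightarrow> nat"
    and n k l m :: nat and c :: real
  assumes "finite P" "card P = n" "inj_on idx P"
    and "1 \<le> l" "l \<le> k" "k \<le> n"
    and "m = k div l" "c \<ge> 1"
    and "Q \<subseteq> P" "card Q = m"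
    and "cost P Q 1 \<le> c * opt_cost P m 1"
    and "C \<subseteq> P" "card C = k"
    and "(\<Union>q\<in>Q. knn idx P q l) \<subseteq> C"
  shows "cost P C l \<le> opt_cost P k l + 2 * c * opt_cost P m 1"
proof -
  have "1 \<le> m"
    using assms(4,5,7) by (metis div_le_mono div_self not_one_le_zero)
  then have Q: "finite Q" "Q \<noteq> {}"
    using assms(1,9,10) finite_subset by auto
  have "P \<noteq> {}"
    using assms(2,4-6) by auto
  have "kdist C p l \<le> opt_cost P k l + 2 * c * opt_cost P m 1" if "p \<in> P" for p
  proof -
    obtain q where q: "q \<in> Q" "dist p q \<le> kdist Q p 1"
      using kdist_one_attained[OF Q] .
    have "0 \<le> kdist Q p 1"
      using Q by (intro kdist_nonneg) (auto simp: Suc_le_eq card_gt_0_iff)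
    moreover have "kdist Q p 1 \<le> c * opt_cost P m 1"
      using kdist_le_cost[OF assms(1) that] assms(11) order_trans by blast
    ultimately have "dist p q \<le> c * opt_cost P m 1" and "0 \<le> c * opt_cost P m 1"
      using q(2) by linarith+
    moreover have "kdist C p l \<le> dist p q + kdist P q l"
      using assms q(1) by (intro kdist_le_dist_plus_kdist_knn) auto
    moreover have "kdist P q l \<le> opt_cost P k l"
      using assms q(1) by (intro kdist_le_opt_cost) auto
    ultimately show ?thesis
      by linarith
  qed
  then show ?thesis
    unfolding cost_def using assms(1) \<open>P \<noteq> {}\<close> by (subst Max_le_iff) auto
qed

end
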